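(* For $n=2,3,\dots$ let $\Omega_n=\{1,\dots,n\}$, $\mathcal P_n=\mathcal P(\Omega_n)$, and $g_n$ the Fisher co-metric on $\mathcal P_n$. Let $\{h_n\}_{n\ge2}$ be given, where $h_n$ is a contravariant tensor field of degree 2 on $\mathcal P_n$ mapping each $p\in\mathcal P_n$ continuously to a bilinear form $h_{n,p}:T_p^*(\mathcal P_n)^2\to\mathbb R$ (not assumed symmetric or positive). The following are equivalent: (i) there is $c\in\mathbb R$ with $h_n=c\,g_n$ for all $n$; (ii) for all $m\le n$ and every Markov co-embedding $\Psi:\mathcal P_n\to\mathcal P_m$, $$h_{m,\Psi(q)}(\alpha,\beta)=h_{n,q}(\Psi_q^*\alpha,\Psi_q^*\beta)\quad\forall q\in\mathcal P_n,\ \forall\alpha,\beta\in T^*_{\Psi(q)}(\mathcal P_m).$$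
   Context: $\mathcal P(\Omega)$ is the manifold of strictly positive probability distributions on a finite set $\Omega$. The Fisher co-metric is the inner product on $T^*_p(\mathcal P(\Omega))$ with $g_p((d\langle A\rangle)_p,(d\langle B\rangle)_p)=\mathrm{Cov}_p(A,B)$ for $A,B\in\mathbb R^\Omega$, where $\langle A\rangle(p)=\sum_\omega p(\omega)A(\omega)$ (every covector is of this form). A Markov map $\mathcal P(\Omega_1)\to\mathcal P(\Omega_2)$ is a map $p\mapsto\sum_xW(\cdot|x)p(x)$ for a channel $W$ with $\forall y\,\exists x\,W(y|x)>0$. A Markov map $\Phi:\mathcal P_m\to\mathcal P_n$ is a Markov embedding if some Markov map $\Psi:\mathcal P_n\to\mathcal P_m$ satisfies $\Psi\circ\Phi=\mathrm{id}_{\mathcal P_m}$; a Markov map $\Psi$ admitting such a $\Phi$ is a Markov co-embedding. $\Psi^*_q$ is the transpose of $(d\Psi)_q$. *)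

theory Defs
  imports "HOL-Analysis.Analysis"
begin

definition Omega :: "nat \<Rightarrow> nat set" where
  "Omega n = {1..n}"

definition Pn :: "nat \<Rightarrow> (nat \<Rightarrow> real) set" where
  "Pn n = {p. (\<forall>x\<in>Omega n. 0 < p x) \<and> (\<Sum>x\<in>Omega n. p x) = 1 \<and> (\<forall>x. x \<notin> Omega n \<longrightarrow> p x = 0)}"

text \<open>Covectors at p: every covector is (d<A>)_p for a random variable A : \<Omega>_n -> R,
  represented here by A :: nat => real (values outside \<Omega>_n are irrelevant);
  (d<A>)_p = (d<A'>)_p iff A - A' is constant on \<Omega>_n.\<close>

definition same_covector :: "nat \<Rightarrow> (nat \<Rightarrow> real) \<Rightarrow> (nat \<Rightarrow> real) \<Rightarrow> bool" where
  "same_covector n A A' \<longleftrightarrow> (\<exists>c. \<forall>x\<in>Omega n. A x = A' x + c)"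

text \<open>Fisher co-metric: g_p(d<A>, d<B>) = Cov_p(A,B).\<close>

definition fisher :: "nat \<Rightarrow> (nat \<Rightarrow> real) \<Rightarrow> (nat \<Rightarrow> real) \<Rightarrow> (nat \<Rightarrow> real) \<Rightarrow> real" where
  "fisher n p A B = (\<Sum>x\<in>Omega n. p x * A x * B x)
      - (\<Sum>x\<in>Omega n. p x * A x) * (\<Sum>x\<in>Omega n. p x * B x)"

text \<open>A contravariant degree-2 tensor field on P_n: h n p A B is the value
  h_{n,p}((d<A>)_p, (d<B>)_p).  It must be well defined on covectors, bilinear, and
  continuous in p.\<close>

definition tensor_field2 :: "nat \<Rightarrow> (nat \<Rightarrow> (nat \<Rightarrow> real) \<Rightarrow> (nat \<Rightarrow> real) \<Rightarrow> (nat \<Rightarrow> real) \<Rightarrow> real) \<Rightarrow> bool" where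
  "tensor_field2 n h \<longleftrightarrow>
     (\<forall>p\<in>Pn n.
        (\<forall>A A' B B'. same_covector n A A' \<longrightarrow> same_covector n B B' \<longrightarrow> h n p A B = h n p A' B')
      \<and> (\<forall>A A' B. h n p (\<lambda>x. A x + A' x) B = h n p A B + h n p A' B)
      \<and> (\<forall>c A B. h n p (\<lambda>x. c * A x) B = c * h n p A B)
      \<and> (\<forall>A B B'. h n p A (\<lambda>x. B x + B' x) = h n p A B + h n p A B')
      \<and> (\<forall>c A B. h n p A (\<lambda>x. c * B x) = c * h n p A B))
   \<and> (\<forall>A B. continuous_on (Pn n) (\<lambda>p. h n p A B))"

text \<open>Channel W from \<Omega>_n to \<Omega>_m, W y x = W(y|x), with every y reachable.\<close>

definition markov_channel :: "nat \<Rightarrow> nat \<Rightarrow> (nat \<Rightarrow> nat \<Rightarrow> real) \<Rightarrow> bool" where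
  "markov_channel n m W \<longleftrightarrow>
     (\<forall>x\<in>Omega n. (\<forall>y\<in>Omega m. 0 \<le> W y x) \<and> (\<Sum>y\<in>Omega m. W y x) = 1)
   \<and> (\<forall>y\<in>Omega m. \<exists>x\<in>Omega n. 0 < W y x)"

definition markov_map :: "nat \<Rightarrow> nat \<Rightarrow> (nat \<Rightarrow> nat \<Rightarrow> real) \<Rightarrow> (nat \<Rightarrow> real) \<Rightarrow> (nat \<Rightarrow> real)" where
  "markov_map n m W p = (\<lambda>y. if y \<in> Omega m then (\<Sum>x\<in>Omega n. W y x * p x) else 0)"

definition markov_coembedding :: "nat \<Rightarrow> nat \<Rightarrow> (nat \<Rightarrow> nat \<Rightarrow> real) \<Rightarrow> bool" where
  "markov_coembedding n m W \<longleftrightarrow> markov_channel n m W \<and>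
     (\<exists>V. markov_channel m n V \<and> (\<forall>p\<in>Pn m. markov_map n m W (markov_map m n V p) = p))"

text \<open>Pullback \<Psi>*_q (d<A>)_{\<Psi>(q)} = d(<A> \<circ> \<Psi>)_q = (d<W^T A>)_q, since
  <A>(\<Psi>(q)) = \<Sum>_x q(x) \<Sum>_y W(y|x) A(y).\<close>

definition markov_pullback :: "nat \<Rightarrow> (nat \<Rightarrow> nat \<Rightarrow> real) \<Rightarrow> (nat \<Rightarrow> real) \<Rightarrow> (nat \<Rightarrow> real)" where
  "markov_pullback m W A = (\<lambda>x. \<Sum>y\<in>Omega m. W y x * A y)"

end

theory Submission
  imports Defs
begin

text \<open>
  Coarse-grainings \<Omega>_n \<rightarrow> \<Omega>_m induced by surjective maps are Markov co-embeddings.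
  Merging all outcomes but x (resp. but x and y) shows that an invariant field has
  h_{n,p}(\<delta>_x, \<delta>_x) = \<phi>(p x) and h_{n,p}(\<delta>_x, \<delta>_y) = \<Theta>(p x, p y) for x \<noteq> y, with \<phi> and \<Theta>
  independent of n. Since the covector of a constant vanishes, every row and column of the
  matrix h_{n,p}(\<delta>_x, \<delta>_y) sums to zero; comparing such sums for n = 3 and n = 4 shows
  that \<Theta> is additive in each argument, so by continuity \<Theta>(a, b) = -c a b, hence
  \<phi>(a) = c a (1 - a), and bilinearity gives h = c g. Conversely, a co-embedding has a right
  inverse, which forces its channel to be deterministic, and the Fisher co-metric is invariant
  under deterministic channels.
\<close>

section \<open>Cauchy's functional equation on an interval\<close>

lemma additive_imp_of_nat_mult:
  fixes f :: "real \<Rightarrow> real"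
  assumes add: "\<And>x y. 0 < x \<Longrightarrow> 0 < y \<Longrightarrow> x + y < L \<Longrightarrow> f (x + y) = f x + f y"
  shows "1 \<le> n \<Longrightarrow> 0 < z \<Longrightarrow> real n * z < L \<Longrightarrow> f (real n * z) = real n * f z"
proof (induction n rule: nat_induct_at_least)
  case base
  then show ?case by simp
next
  case (Suc n)
  have split: "real (Suc n) * z = real n * z + z" by (simp add: algebra_simps)
  moreover have "real n * z < L" "0 < real n * z"
    using Suc split by auto
  ultimately show ?case using add[of "real n * z" z] Suc by (simp add: algebra_simps)
qed

lemma additive_imp_rat_mult:
  fixes f :: "real \<Rightarrow> real"
  assumes add: "\<And>x y. 0 < x \<Longrightarrow> 0 < y \<Longrightarrow> x + y < L \<Longrightarrow> f (x + y) = f x + f y"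
    and r: "r \<in> \<rat>" "0 < r" and y: "0 < y" "y < L" and ry: "r * y < L"
  shows "f (r * y) = r * f y"
proof -
  obtain a b :: int where ab: "0 < b" "r = of_int a / of_int b"
    using r(1) by (metis Rats_cases')
  then have "0 < a" using r(2) by (simp add: zero_less_divide_iff)
  define p q where "p = nat a" and "q = nat b"
  have pq: "r = real p / real q" "1 \<le> p" "1 \<le> q"
    using ab \<open>0 < a\<close> by (auto simp: p_def q_def)
  have z: "0 < y / real q" using pq y by simp
  have "f y = f (real q * (y / real q))" using pq by simp
  also have "\<dots> = real q * f (y / real q)"
    using additive_imp_of_nat_mult[OF add, where n = q and z = "y / real q"] pq z y by simp
  finally have fz: "f (y / real q) = f y / real q" using pq by (simp add: field_simps)
  have "f (r * y) = f (real p * (y / real q))" using pq by simp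
  also have "\<dots> = real p * f (y / real q)"
    using additive_imp_of_nat_mult[OF add, where n = p and z = "y / real q"] pq z ry by simp
  finally show ?thesis using fz pq by simp
qed

lemma continuous_additive_imp_linear:
  fixes f :: "real \<Rightarrow> real"
  assumes cont: "continuous_on {0<..<L} f"
    and add: "\<And>x y. 0 < x \<Longrightarrow> 0 < y \<Longrightarrow> x + y < L \<Longrightarrow> f (x + y) = f x + f y"
  shows "\<exists>k. \<forall>x\<in>{0<..<L}. f x = k * x"
proof (cases "0 < L")
  case False
  then show ?thesis by auto
next
  case True
  define y0 where "y0 = L / 2"
  have y0: "0 < y0" "y0 < L" using True by (auto simp: y0_def)
  define k where "k = f y0 / y0"
  have "f x = k * x" if x: "x \<in> {0<..<L}" for x
  proof (rule ccontr)
    assume ne: "f x \<noteq> k * x"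
    define g where "g t = f t - k * t" for t
    have "continuous_on {0<..<L} g" unfolding g_def by (intro continuous_intros cont)
    moreover have "0 < \<bar>g x\<bar>" using ne by (simp add: g_def)
    ultimately obtain d where d: "0 < d"
      and near: "\<And>x'. x' \<in> {0<..<L} \<Longrightarrow> dist x' x < d \<Longrightarrow> dist (g x') (g x) < \<bar>g x\<bar>"
      using x unfolding continuous_on_iff by metis
    define lo hi where "lo = max 0 (x - d)" and "hi = min L (x + d)"
    have "lo / y0 < hi / y0" using x d y0 by (auto simp: lo_def hi_def divide_strict_right_mono)
    then obtain r where r: "r \<in> \<rat>" "lo / y0 < r" "r < hi / y0"
      using Rats_dense_in_real by blast
    have r_bounds: "lo < r * y0" "r * y0 < hi" using r y0 by (simp_all add: field_simps)
    then have "0 < r" using y0 by (simp add: lo_def zero_less_mult_iff)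
    have ry0: "r * y0 \<in> {0<..<L}" using r_bounds by (auto simp: lo_def hi_def)
    have "g (r * y0) = 0"
      using additive_imp_rat_mult[OF add r(1) \<open>0 < r\<close> y0] ry0 y0 by (simp add: g_def k_def)
    moreover have "dist (r * y0) x < d" using r_bounds by (auto simp: lo_def hi_def dist_real_def)
    ultimately show False using near[OF ry0] by (simp add: dist_real_def)
  qed
  then show ?thesis by blast
qed

section \<open>Probability vectors and bilinear forms on covectors\<close>

lemma finite_Omega [simp]: "finite (Omega n)"
  by (simp add: Omega_def)

lemma card_Omega [simp]: "card (Omega n) = n"
  by (simp add: Omega_def)

lemma Omega_numeral: "Omega 2 = {1, 2}" "Omega 3 = {1, 2, 3}" "Omega 4 = {1, 2, 3, 4}"
  by (auto simp: Omega_def)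

lemma Omega_not_subset:
  assumes "finite S" "card S < n"
  shows "\<exists>w\<in>Omega n. w \<notin> S"
  using card_mono[OF assms(1), of "Omega n"] assms(2) by auto

lemma Pn_sum_less_one:
  assumes p: "p \<in> Pn n" and S: "S \<subseteq> Omega n" "card S < n"
  shows "sum p S < 1"
proof -
  obtain w where w: "w \<in> Omega n" "w \<notin> S"
    using Omega_not_subset[OF finite_subset[OF S(1)] S(2)] by auto
  have "sum p S < sum p (Omega n)"
    using p w S(1) by (intro sum_strict_mono2) (auto simp: Pn_def less_imp_le)
  then show ?thesis using p by (simp add: Pn_def)
qed

lemma same_covector_eq_on_Omega:
  "(\<And>x. x \<in> Omega n \<Longrightarrow> A x = A' x) \<Longrightarrow> same_covector n A A'"
  unfolding same_covector_def by (intro exI[of _ 0]) simp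

lemma same_covector_const_zero:
  "(\<And>x. x \<in> Omega n \<Longrightarrow> A x = c) \<Longrightarrow> same_covector n A (\<lambda>_. 0)"
  unfolding same_covector_def by (intro exI[of _ c]) simp

context
  fixes n h p
  assumes tensor: "tensor_field2 n h" and p: "p \<in> Pn n"
begin

lemma tensor_field2_cong:
  "same_covector n A A' \<Longrightarrow> same_covector n B B' \<Longrightarrow> h n p A B = h n p A' B'"
  using tensor p unfolding tensor_field2_def by blast

lemma tensor_field2_cong_Omega:
  "(\<And>x. x \<in> Omega n \<Longrightarrow> A x = A' x) \<Longrightarrow> (\<And>x. x \<in> Omega n \<Longrightarrow> B x = B' x)
    \<Longrightarrow> h n p A B = h n p A' B'"
  by (intro tensor_field2_cong same_covector_eq_on_Omega)

lemma tensor_field2_add_left: "h n p (\<lambda>x. A x + A' x) B = h n p A B + h n p A' B"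
  using tensor p unfolding tensor_field2_def by blast

lemma tensor_field2_add_right: "h n p A (\<lambda>x. B x + B' x) = h n p A B + h n p A B'"
  using tensor p unfolding tensor_field2_def by blast

lemma tensor_field2_scale_left: "h n p (\<lambda>x. c * A x) B = c * h n p A B"
  using tensor p unfolding tensor_field2_def by blast

lemma tensor_field2_scale_right: "h n p A (\<lambda>x. c * B x) = c * h n p A B"
  using tensor p unfolding tensor_field2_def by blast

lemma tensor_field2_zero_left: "h n p (\<lambda>_. 0) B = 0"
  using tensor_field2_scale_left[of 0 B B] by simp

lemma tensor_field2_zero_right: "h n p A (\<lambda>_. 0) = 0"
  using tensor_field2_scale_right[of A 0 A] by simp

lemma tensor_field2_const_left: "(\<And>x. x \<in> Omega n \<Longrightarrow> A x = c) \<Longrightarrow> h n p A B = 0"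
  by (metis tensor_field2_cong tensor_field2_zero_left same_covector_const_zero
      same_covector_eq_on_Omega)

lemma tensor_field2_const_right: "(\<And>x. x \<in> Omega n \<Longrightarrow> B x = c) \<Longrightarrow> h n p A B = 0"
  by (metis tensor_field2_cong tensor_field2_zero_right same_covector_const_zero
      same_covector_eq_on_Omega)

lemma tensor_field2_sum_left:
  "finite S \<Longrightarrow> h n p (\<lambda>x. \<Sum>i\<in>S. F i x) B = (\<Sum>i\<in>S. h n p (F i) B)"
  by (induction S rule: finite_induct) (simp_all add: tensor_field2_zero_left tensor_field2_add_left)

lemma tensor_field2_sum_right:
  "finite S \<Longrightarrow> h n p A (\<lambda>x. \<Sum>i\<in>S. F i x) = (\<Sum>i\<in>S. h n p A (F i))"
  by (induction S rule: finite_induct) (simp_all add: tensor_field2_zero_right tensor_field2_add_right)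

lemma tensor_field2_expand:
  "h n p A B = (\<Sum>x\<in>Omega n. \<Sum>y\<in>Omega n. A x * B y * h n p (indicator {x}) (indicator {y}))"
proof -
  have "h n p A B = h n p (\<lambda>z. \<Sum>x\<in>Omega n. A x * indicator {x} z) (\<lambda>z. \<Sum>y\<in>Omega n. B y * indicator {y} z)"
    by (rule tensor_field2_cong_Omega) (simp_all add: indicator_def)
  also have "\<dots> = (\<Sum>x\<in>Omega n. \<Sum>y\<in>Omega n. A x * (B y * h n p (indicator {x}) (indicator {y})))"
    by (simp only: tensor_field2_sum_left[OF finite_Omega] tensor_field2_sum_right[OF finite_Omega]
        tensor_field2_scale_left tensor_field2_scale_right sum_distrib_left)
  also have "\<dots> = (\<Sum>x\<in>Omega n. \<Sum>y\<in>Omega n. A x * B y * h n p (indicator {x}) (indicator {y}))"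
    by (simp add: mult.assoc)
  finally show ?thesis .
qed

lemma tensor_field2_sum_indicator_left: "(\<Sum>x\<in>Omega n. h n p (indicator {x}) B) = 0"
proof -
  have "(\<Sum>x\<in>Omega n. h n p (indicator {x}) B) = h n p (\<lambda>z. \<Sum>x\<in>Omega n. indicator {x} z) B"
    by (simp add: tensor_field2_sum_left)
  also have "\<dots> = 0"
    by (rule tensor_field2_const_left[where c = 1]) (simp add: indicator_def)
  finally show ?thesis .
qed

lemma tensor_field2_sum_indicator_right: "(\<Sum>y\<in>Omega n. h n p A (indicator {y})) = 0"
proof -
  have "(\<Sum>y\<in>Omega n. h n p A (indicator {y})) = h n p A (\<lambda>z. \<Sum>y\<in>Omega n. indicator {y} z)"
    by (simp add: tensor_field2_sum_right)
  also have "\<dots> = 0"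
    by (rule tensor_field2_const_right[where c = 1]) (simp add: indicator_def)
  finally show ?thesis .
qed

end

section \<open>Deterministic channels and co-embeddings\<close>

definition deterministic_channel :: "(nat \<Rightarrow> nat) \<Rightarrow> nat \<Rightarrow> nat \<Rightarrow> real" where
  "deterministic_channel g y x = (if g x = y then 1 else 0)"

definition channel_induced_by :: "nat \<Rightarrow> nat \<Rightarrow> (nat \<Rightarrow> nat) \<Rightarrow> (nat \<Rightarrow> nat \<Rightarrow> real) \<Rightarrow> bool" where
  "channel_induced_by n m g W \<longleftrightarrow>
     (\<forall>x\<in>Omega n. g x \<in> Omega m \<and> (\<forall>y\<in>Omega m. W y x = deterministic_channel g y x))"

lemma channel_induced_by_deterministic_channel:
  "g ` Omega n \<subseteq> Omega m \<Longrightarrow> channel_induced_by n m g (deterministic_channel g)"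
  by (auto simp: channel_induced_by_def)

lemma markov_map_channel_induced:
  assumes "channel_induced_by n m g W" "y \<in> Omega m"
  shows "markov_map n m W q y = sum q {x\<in>Omega n. g x = y}"
proof -
  have "markov_map n m W q y = (\<Sum>x\<in>Omega n. if g x = y then q x else 0)"
    using assms by (auto simp: markov_map_def channel_induced_by_def deterministic_channel_def
        intro!: sum.cong)
  then show ?thesis by (simp add: sum.inter_filter)
qed

lemma markov_pullback_channel_induced:
  assumes "channel_induced_by n m g W" "x \<in> Omega n"
  shows "markov_pullback m W A x = A (g x)"
proof -
  have "markov_pullback m W A x = (\<Sum>y\<in>Omega m. if g x = y then A y else 0)"
    unfolding markov_pullback_def using assms
    by (intro sum.cong) (auto simp: channel_induced_by_def deterministic_channel_def)
  then show ?thesis using assms by (simp add: channel_induced_by_def)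
qed

lemma sum_markov_map_channel_induced:
  assumes "channel_induced_by n m g W"
  shows "(\<Sum>y\<in>Omega m. markov_map n m W q y * F y) = (\<Sum>x\<in>Omega n. q x * F (g x))"
proof -
  have "(\<Sum>y\<in>Omega m. markov_map n m W q y * F y)
      = (\<Sum>y\<in>Omega m. \<Sum>x\<in>{x\<in>Omega n. g x = y}. q x * F (g x))"
    using assms by (auto simp: markov_map_channel_induced sum_distrib_right intro!: sum.cong)
  also have "\<dots> = (\<Sum>x\<in>Omega n. q x * F (g x))"
    using assms by (intro sum.group) (auto simp: channel_induced_by_def)
  finally show ?thesis .
qed

lemma fisher_markov_map_channel_induced:
  assumes "channel_induced_by n m g W"
  shows "fisher m (markov_map n m W q) A B
       = fisher n q (markov_pullback m W A) (markov_pullback m W B)"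
  unfolding fisher_def
  using sum_markov_map_channel_induced[OF assms, of q "\<lambda>y. A y * B y"]
    sum_markov_map_channel_induced[OF assms, of q A]
    sum_markov_map_channel_induced[OF assms, of q B]
  by (simp add: markov_pullback_channel_induced[OF assms] mult.assoc)

lemma markov_map_channel_induced_eqI:
  assumes induced: "channel_induced_by n m g W"
    and fibers: "\<And>y. y \<in> Omega m \<Longrightarrow> sum q {x\<in>Omega n. g x = y} = r y"
    and outside: "\<And>y. y \<notin> Omega m \<Longrightarrow> r y = 0"
  shows "markov_map n m W q = r"
proof
  fix y
  show "markov_map n m W q y = r y"
  proof (cases "y \<in> Omega m")
    case True
    then show ?thesis by (simp add: markov_map_channel_induced[OF induced] fibers)
  next
    case False
    then show ?thesis by (simp add: markov_map_def outside)
  qed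
qed

lemma markov_map_in_Pn:
  assumes W: "markov_channel n m W" and q: "q \<in> Pn n"
  shows "markov_map n m W q \<in> Pn m"
proof -
  have "0 < markov_map n m W q y" if y: "y \<in> Omega m" for y
  proof -
    obtain x where x: "x \<in> Omega n" "0 < W y x" using W y unfolding markov_channel_def by blast
    have "0 < W y x * q x" using x q by (simp add: Pn_def)
    also have "\<dots> \<le> (\<Sum>x'\<in>Omega n. W y x' * q x')"
      using W q y x by (intro member_le_sum) (auto simp: markov_channel_def Pn_def less_imp_le)
    finally show ?thesis using y by (simp add: markov_map_def)
  qed
  moreover have "(\<Sum>y\<in>Omega m. markov_map n m W q y) = 1"
  proof -
    have "(\<Sum>y\<in>Omega m. markov_map n m W q y) = (\<Sum>x\<in>Omega n. q x * (\<Sum>y\<in>Omega m. W y x))"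
      by (simp add: markov_map_def sum_distrib_left sum.swap[of _ "Omega m"] mult.commute)
    also have "\<dots> = 1" using W q by (simp add: markov_channel_def Pn_def)
    finally show ?thesis .
  qed
  ultimately show ?thesis by (simp add: Pn_def markov_map_def)
qed

definition fiber_uniform_channel :: "nat \<Rightarrow> (nat \<Rightarrow> nat) \<Rightarrow> nat \<Rightarrow> nat \<Rightarrow> real" where
  "fiber_uniform_channel n g x y = (if g x = y then 1 / card {x'\<in>Omega n. g x' = y} else 0)"

lemma card_fiber_pos:
  "g ` Omega n = Omega m \<Longrightarrow> y \<in> Omega m \<Longrightarrow> 0 < card {x\<in>Omega n. g x = y}"
  by (auto simp: card_gt_0_iff dest: sym)

lemma markov_channel_deterministic_channel:
  assumes surj: "g ` Omega n = Omega m"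
  shows "markov_channel n m (deterministic_channel g)"
proof -
  have "\<forall>x\<in>Omega n. (\<forall>y\<in>Omega m. 0 \<le> deterministic_channel g y x)
      \<and> (\<Sum>y\<in>Omega m. deterministic_channel g y x) = 1"
    using surj[symmetric] by (auto simp: deterministic_channel_def)
  moreover have "\<forall>y\<in>Omega m. \<exists>x\<in>Omega n. 0 < deterministic_channel g y x"
    using surj[symmetric] by (auto simp: deterministic_channel_def)
  ultimately show ?thesis by (simp add: markov_channel_def)
qed

lemma markov_channel_fiber_uniform_channel:
  assumes surj: "g ` Omega n = Omega m"
  shows "markov_channel m n (fiber_uniform_channel n g)"
proof -
  have "(\<Sum>x\<in>Omega n. fiber_uniform_channel n g x y) = 1" if "y \<in> Omega m" for y
  proof -
    let ?F = "{x\<in>Omega n. g x = y}"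
    have "(\<Sum>x\<in>Omega n. fiber_uniform_channel n g x y) = (\<Sum>x\<in>?F. 1 / card ?F)"
      unfolding fiber_uniform_channel_def by (rule sum.inter_filter[symmetric, OF finite_Omega])
    also have "\<dots> = 1" using card_fiber_pos[OF surj that] by (simp add: card_gt_0_iff)
    finally show ?thesis .
  qed
  moreover have "\<exists>y\<in>Omega m. 0 < fiber_uniform_channel n g x y" if "x \<in> Omega n" for x
    using that surj card_fiber_pos[OF surj] by (auto simp: fiber_uniform_channel_def)
  moreover have "0 \<le> fiber_uniform_channel n g x y" for x y
    by (simp add: fiber_uniform_channel_def)
  ultimately show ?thesis by (simp add: markov_channel_def)
qed

lemma markov_map_fiber_uniform_channel:
  assumes surj: "g ` Omega n = Omega m" and x: "x \<in> Omega n"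
  shows "markov_map m n (fiber_uniform_channel n g) p x = p (g x) / card {x'\<in>Omega n. g x' = g x}"
proof -
  have "markov_map m n (fiber_uniform_channel n g) p x
      = (\<Sum>y\<in>Omega m. fiber_uniform_channel n g x y * p y)"
    using x by (simp add: markov_map_def)
  also have "\<dots> = (\<Sum>y\<in>Omega m. if g x = y then p y / card {x'\<in>Omega n. g x' = y} else 0)"
    by (rule sum.cong) (auto simp: fiber_uniform_channel_def)
  also have "\<dots> = p (g x) / card {x'\<in>Omega n. g x' = g x}"
    using x surj by (auto simp: sum.delta')
  finally show ?thesis .
qed

lemma markov_coembedding_deterministic_channel:
  assumes surj: "g ` Omega n = Omega m"
  shows "markov_coembedding n m (deterministic_channel g)"
proof -
  have induced: "channel_induced_by n m g (deterministic_channel g)"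
    using surj by (simp add: channel_induced_by_deterministic_channel)
  have "markov_map n m (deterministic_channel g) (markov_map m n (fiber_uniform_channel n g) p) = p"
    if p: "p \<in> Pn m" for p
  proof (rule markov_map_channel_induced_eqI[OF induced])
    fix y
    assume y: "y \<in> Omega m"
    then show "sum (markov_map m n (fiber_uniform_channel n g) p) {x\<in>Omega n. g x = y} = p y"
      using card_fiber_pos[OF surj y]
      by (simp add: markov_map_fiber_uniform_channel[OF surj] card_gt_0_iff)
  qed (use p in \<open>simp add: Pn_def\<close>)
  then show ?thesis
    unfolding markov_coembedding_def
    using markov_channel_deterministic_channel[OF surj] markov_channel_fiber_uniform_channel[OF surj]
    by blast
qed

lemma composite_kernel_eq_delta:
  assumes comp: "\<forall>p\<in>Pn m. markov_map n m W (markov_map m n V p) = p"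
    and m: "1 \<le> m" and y: "y \<in> Omega m" and y0: "y0 \<in> Omega m"
  shows "(\<Sum>x\<in>Omega n. W y x * V x y0) = (if y = y0 then 1 else 0)"
proof -
  define M where "M y' = (\<Sum>x\<in>Omega n. W y x * V x y')" for y'
  have mix: "p y = (\<Sum>y'\<in>Omega m. M y' * p y')" if p: "p \<in> Pn m" for p
  proof -
    have "p y = markov_map n m W (markov_map m n V p) y" using comp p by simp
    also have "\<dots> = (\<Sum>x\<in>Omega n. W y x * (\<Sum>y'\<in>Omega m. V x y' * p y'))"
      using y by (simp add: markov_map_def)
    also have "\<dots> = (\<Sum>y'\<in>Omega m. M y' * p y')"
      by (simp add: M_def sum_distrib_left sum_distrib_right sum.swap[of _ "Omega n"] mult.assoc)
    finally show ?thesis .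
  qed
  \<comment> \<open>Testing on the uniform distribution u and on (\<delta>_y0 + u)/2 isolates the column y0.\<close>
  define u where "u z = (if z \<in> Omega m then 1 / real m else 0)" for z
  define v where "v z = (if z = y0 then 1 / 2 else 0) + u z / 2" for z
  have u: "u \<in> Pn m" using m by (auto simp: Pn_def u_def)
  have v: "v \<in> Pn m"
    using u y0 m by (auto simp: Pn_def v_def sum.distrib sum_divide_distrib[symmetric] add_nonneg_pos)
  have "v y = (\<Sum>y'\<in>Omega m. (if y' = y0 then M y' / 2 else 0) + M y' * u y' / 2)"
    unfolding mix[OF v] by (rule sum.cong) (auto simp: v_def algebra_simps)
  also have "\<dots> = M y0 / 2 + u y / 2"
    using y0 by (simp add: sum.distrib sum_divide_distrib mix[OF u])
  finally show ?thesis by (auto simp: M_def v_def split: if_splits)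
qed

lemma markov_coembedding_imp_channel_induced:
  assumes "markov_coembedding n m W" "1 \<le> m"
  obtains g where "channel_induced_by n m g W"
proof -
  obtain V where W: "markov_channel n m W" and V: "markov_channel m n V"
    and comp: "\<forall>p\<in>Pn m. markov_map n m W (markov_map m n V p) = p"
    using assms(1) unfolding markov_coembedding_def by blast
  have "\<forall>x\<in>Omega n. \<exists>y0. y0 \<in> Omega m \<and> (\<forall>y\<in>Omega m. W y x = (if y0 = y then 1 else 0))"
  proof
    fix x
    assume x: "x \<in> Omega n"
    obtain y0 where y0: "y0 \<in> Omega m" "0 < V x y0" using V x unfolding markov_channel_def by blast
    have zero: "W y x = 0" if y: "y \<in> Omega m" "y \<noteq> y0" for y
    proof -
      have "(\<Sum>x'\<in>Omega n. W y x' * V x' y0) = 0"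
        using composite_kernel_eq_delta[OF comp assms(2) y(1) y0(1)] y(2) by simp
      moreover have "\<forall>x'\<in>Omega n. 0 \<le> W y x' * V x' y0"
        using W V y y0 unfolding markov_channel_def by auto
      ultimately have "W y x * V x y0 = 0" using x by (simp add: sum_nonneg_eq_0_iff)
      then show ?thesis using y0 by simp
    qed
    have "1 = (\<Sum>y\<in>Omega m. W y x)" using W x unfolding markov_channel_def by simp
    also have "\<dots> = W y0 x" using y0 zero by (simp add: sum.remove[OF finite_Omega y0(1)])
    finally show "\<exists>y0. y0 \<in> Omega m \<and> (\<forall>y\<in>Omega m. W y x = (if y0 = y then 1 else 0))"
      using y0 zero by auto
  qed
  from bchoice[OF this] obtain g
    where "\<forall>x\<in>Omega n. g x \<in> Omega m \<and> (\<forall>y\<in>Omega m. W y x = (if g x = y then 1 else 0))"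
    by blast
  then have "channel_induced_by n m g W" by (simp add: channel_induced_by_def deterministic_channel_def)
  then show ?thesis by (rule that)
qed

lemma fisher_multiple_coembedding_invariant:
  assumes h: "\<forall>n\<ge>2. \<forall>p\<in>Pn n. \<forall>A B. h n p A B = c * fisher n p A B"
    and m: "2 \<le> m" "m \<le> n" and W: "markov_coembedding n m W" and q: "q \<in> Pn n"
  shows "h m (markov_map n m W q) A B = h n q (markov_pullback m W A) (markov_pullback m W B)"
proof -
  obtain g where g: "channel_induced_by n m g W"
    using markov_coembedding_imp_channel_induced[OF W] m by auto
  have "markov_map n m W q \<in> Pn m"
    using W q markov_map_in_Pn unfolding markov_coembedding_def by blast
  then show ?thesis using h m q by (simp add: fisher_markov_map_channel_induced[OF g])
qed

section \<open>Tensor fields invariant under co-embeddings\<close>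

definition dist2 :: "real \<Rightarrow> nat \<Rightarrow> real" where
  "dist2 a = (\<lambda>z. if z = 1 then a else if z = 2 then 1 - a else 0)"

definition dist3 :: "real \<Rightarrow> real \<Rightarrow> nat \<Rightarrow> real" where
  "dist3 a b = (\<lambda>z. if z = 1 then a else if z = 2 then b else if z = 3 then 1 - a - b else 0)"

definition dist4 :: "real \<Rightarrow> real \<Rightarrow> real \<Rightarrow> nat \<Rightarrow> real" where
  "dist4 a b c = (\<lambda>z. if z = 1 then a else if z = 2 then b else if z = 3 then c
     else if z = 4 then 1 - a - b - c else 0)"

lemma dist3_in_Pn: "0 < a \<Longrightarrow> 0 < b \<Longrightarrow> a + b < 1 \<Longrightarrow> dist3 a b \<in> Pn 3"
  by (auto simp: Pn_def Omega_numeral dist3_def)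

lemma dist4_in_Pn: "0 < a \<Longrightarrow> 0 < b \<Longrightarrow> 0 < c \<Longrightarrow> a + b + c < 1 \<Longrightarrow> dist4 a b c \<in> Pn 4"
  by (auto simp: Pn_def Omega_numeral dist4_def)

lemma continuous_on_dist3:
  assumes "continuous_on S f" "continuous_on S g"
  shows "continuous_on S (\<lambda>t. dist3 (f t) (g t))"
proof (rule continuous_on_coordinatewise_then_product)
  fix i :: nat
  show "continuous_on S (\<lambda>t. dist3 (f t) (g t) i)"
    unfolding dist3_def using assms
    by (cases "i = 1"; cases "i = 2"; cases "i = 3") (simp_all add: continuous_on_diff)
qed

locale coembedding_invariant =
  fixes h :: "nat \<Rightarrow> (nat \<Rightarrow> real) \<Rightarrow> (nat \<Rightarrow> real) \<Rightarrow> (nat \<Rightarrow> real) \<Rightarrow> real"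
  assumes tensor_field: "\<And>n. 2 \<le> n \<Longrightarrow> tensor_field2 n h"
    and invariant: "\<And>m n W q A B. 2 \<le> m \<Longrightarrow> m \<le> n \<Longrightarrow> markov_coembedding n m W \<Longrightarrow> q \<in> Pn n
      \<Longrightarrow> h m (markov_map n m W q) A B = h n q (markov_pullback m W A) (markov_pullback m W B)"
begin

lemma invariant_coarse_graining:
  assumes surj: "g ` Omega n = Omega m" and "2 \<le> m" "m \<le> n" and q: "q \<in> Pn n"
  shows "h m (markov_map n m (deterministic_channel g) q) A B = h n q (\<lambda>x. A (g x)) (\<lambda>x. B (g x))"
proof -
  have induced: "channel_induced_by n m g (deterministic_channel g)"
    using surj by (simp add: channel_induced_by_deterministic_channel)
  have "h m (markov_map n m (deterministic_channel g) q) A B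
      = h n q (markov_pullback m (deterministic_channel g) A) (markov_pullback m (deterministic_channel g) B)"
    using assms by (intro invariant markov_coembedding_deterministic_channel)
  also have "\<dots> = h n q (\<lambda>x. A (g x)) (\<lambda>x. B (g x))"
    using assms by (intro tensor_field2_cong_Omega[OF tensor_field q])
      (simp_all add: markov_pullback_channel_induced[OF induced])
  finally show ?thesis .
qed

definition diag_coeff :: "real \<Rightarrow> real" where
  "diag_coeff a = h 2 (dist2 a) (indicator {1}) (indicator {1})"

definition offdiag_coeff :: "real \<Rightarrow> real \<Rightarrow> real" where
  "offdiag_coeff a b = h 3 (dist3 a b) (indicator {1}) (indicator {2})"

lemma h_indicator_diag:
  assumes n: "2 \<le> n" and q: "q \<in> Pn n" and x: "x \<in> Omega n"
  shows "h n q (indicator {x}) (indicator {x}) = diag_coeff (q x)"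
proof -
  define g where "g z = (if z = x then 1 else 2 :: nat)" for z
  obtain w where w: "w \<in> Omega n" "w \<noteq> x" using Omega_not_subset[of "{x}" n] n by auto
  have surj: "g ` Omega n = Omega 2"
    using x w by (force simp: g_def Omega_numeral)
  have induced: "channel_induced_by n 2 g (deterministic_channel g)"
    using surj by (simp add: channel_induced_by_deterministic_channel)
  have fibers: "{z\<in>Omega n. g z = 1} = {x}" "{z\<in>Omega n. g z = 2} = Omega n - {x}"
    using x by (auto simp: g_def)
  have "markov_map n 2 (deterministic_channel g) q = dist2 (q x)"
  proof (rule markov_map_channel_induced_eqI[OF induced])
    fix z :: nat
    assume "z \<in> Omega 2"
    then consider "z = 1" | "z = 2" by (auto simp: Omega_numeral)
    then show "sum q {v\<in>Omega n. g v = z} = dist2 (q x) z"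
    proof cases
      case 2
      then show ?thesis using fibers q x by (simp add: dist2_def Pn_def sum_diff1)
    qed (use fibers in \<open>simp add: dist2_def\<close>)
  qed (auto simp: Omega_numeral dist2_def)
  moreover have "(\<lambda>z. indicator {1} (g z)) = (indicator {x} :: nat \<Rightarrow> real)"
    by (auto simp: indicator_def g_def)
  ultimately show ?thesis
    using invariant_coarse_graining[OF surj _ n q, of "indicator {1}" "indicator {1}"]
    by (simp add: diag_coeff_def)
qed

lemma h_indicator_offdiag:
  assumes n: "3 \<le> n" and q: "q \<in> Pn n" and x: "x \<in> Omega n" and y: "y \<in> Omega n" and xy: "x \<noteq> y"
  shows "h n q (indicator {x}) (indicator {y}) = offdiag_coeff (q x) (q y)"
proof -
  define g where "g z = (if z = x then 1 else if z = y then 2 else 3 :: nat)" for z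
  obtain w where w: "w \<in> Omega n" "w \<notin> {x, y}"
    using Omega_not_subset[of "{x, y}" n] n card_insert_le_m1[of 2 "{y}" x] by force
  have surj: "g ` Omega n = Omega 3"
    using x y w xy by (force simp: g_def Omega_numeral)
  have induced: "channel_induced_by n 3 g (deterministic_channel g)"
    using surj by (simp add: channel_induced_by_deterministic_channel)
  have fibers: "{z\<in>Omega n. g z = 1} = {x}" "{z\<in>Omega n. g z = 2} = {y}"
    "{z\<in>Omega n. g z = 3} = Omega n - {x, y}"
    using x y xy by (auto simp: g_def)
  have "markov_map n 3 (deterministic_channel g) q = dist3 (q x) (q y)"
  proof (rule markov_map_channel_induced_eqI[OF induced])
    fix z :: nat
    assume "z \<in> Omega 3"
    then consider "z = 1" | "z = 2" | "z = 3" by (auto simp: Omega_numeral)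
    then show "sum q {v\<in>Omega n. g v = z} = dist3 (q x) (q y) z"
    proof cases
      case 3
      then show ?thesis using fibers q x y xy by (simp add: dist3_def Pn_def sum_diff)
    qed (use fibers in \<open>simp_all add: dist3_def\<close>)
  qed (auto simp: Omega_numeral dist3_def)
  moreover have "(\<lambda>z. indicator {1} (g z)) = (indicator {x} :: nat \<Rightarrow> real)"
    "(\<lambda>z. indicator {2} (g z)) = (indicator {y} :: nat \<Rightarrow> real)"
    using xy by (auto simp: indicator_def g_def)
  ultimately show ?thesis
    using invariant_coarse_graining[OF surj _ n q, of "indicator {1}" "indicator {2}"]
    by (simp add: offdiag_coeff_def)
qed

lemma diag_offdiag_row_sum:
  assumes "3 \<le> n" "p \<in> Pn n" "x \<in> Omega n"
  shows "diag_coeff (p x) + (\<Sum>y\<in>Omega n - {x}. offdiag_coeff (p x) (p y)) = 0"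
proof -
  have "0 = (\<Sum>y\<in>Omega n. h n p (indicator {x}) (indicator {y}))"
    using assms by (intro tensor_field2_sum_indicator_right[symmetric] tensor_field) auto
  also have "\<dots> = h n p (indicator {x}) (indicator {x}) + (\<Sum>y\<in>Omega n - {x}. h n p (indicator {x}) (indicator {y}))"
    using assms(3) by (simp add: sum.remove)
  finally show ?thesis
    using assms by (simp add: h_indicator_diag h_indicator_offdiag)
qed

lemma diag_offdiag_column_sum:
  assumes "3 \<le> n" "p \<in> Pn n" "x \<in> Omega n"
  shows "diag_coeff (p x) + (\<Sum>y\<in>Omega n - {x}. offdiag_coeff (p y) (p x)) = 0"
proof -
  have "0 = (\<Sum>y\<in>Omega n. h n p (indicator {y}) (indicator {x}))"
    using assms by (intro tensor_field2_sum_indicator_left[symmetric] tensor_field) auto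
  also have "\<dots> = h n p (indicator {x}) (indicator {x}) + (\<Sum>y\<in>Omega n - {x}. h n p (indicator {y}) (indicator {x}))"
    using assms(3) by (simp add: sum.remove)
  finally show ?thesis
    using assms by (simp add: h_indicator_diag h_indicator_offdiag)
qed

lemma offdiag_coeff_add_right:
  assumes "0 < a" "0 < c" "0 < d" "a + c + d < 1"
  shows "offdiag_coeff a (c + d) = offdiag_coeff a c + offdiag_coeff a d"
proof -
  have "diag_coeff a + (offdiag_coeff a c + (offdiag_coeff a d + offdiag_coeff a (1 - a - c - d))) = 0"
    using diag_offdiag_row_sum[of 4 "dist4 a c d" 1] dist4_in_Pn[of a c d] assms
    by (simp add: Omega_numeral dist4_def)
  moreover have "diag_coeff a + (offdiag_coeff a (c + d) + offdiag_coeff a (1 - a - c - d)) = 0"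
    using diag_offdiag_row_sum[of 3 "dist3 a (c + d)" 1] dist3_in_Pn[of a "c + d"] assms
    by (simp add: Omega_numeral dist3_def diff_diff_eq add.assoc)
  ultimately show ?thesis by simp
qed

lemma offdiag_coeff_add_left:
  assumes "0 < a" "0 < c" "0 < d" "a + c + d < 1"
  shows "offdiag_coeff (c + d) a = offdiag_coeff c a + offdiag_coeff d a"
proof -
  have "diag_coeff a + (offdiag_coeff c a + (offdiag_coeff d a + offdiag_coeff (1 - a - c - d) a)) = 0"
    using diag_offdiag_column_sum[of 4 "dist4 a c d" 1] dist4_in_Pn[of a c d] assms
    by (simp add: Omega_numeral dist4_def)
  moreover have "diag_coeff a + (offdiag_coeff (c + d) a + offdiag_coeff (1 - a - c - d) a) = 0"
    using diag_offdiag_column_sum[of 3 "dist3 a (c + d)" 1] dist3_in_Pn[of a "c + d"] assms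
    by (simp add: Omega_numeral dist3_def diff_diff_eq add.assoc)
  ultimately show ?thesis by simp
qed

lemma continuous_on_offdiag_coeff:
  assumes "continuous_on S f" "continuous_on S g"
    and "\<And>t. t \<in> S \<Longrightarrow> 0 < f t \<and> 0 < g t \<and> f t + g t < 1"
  shows "continuous_on S (\<lambda>t. offdiag_coeff (f t) (g t))"
proof -
  have "continuous_on (Pn 3) (\<lambda>p. h 3 p (indicator {1}) (indicator {2}))"
    using tensor_field[of 3] unfolding tensor_field2_def by simp
  moreover have "(\<lambda>t. dist3 (f t) (g t)) ` S \<subseteq> Pn 3"
    using assms(3) dist3_in_Pn by auto
  ultimately show ?thesis
    unfolding offdiag_coeff_def by (rule continuous_on_compose2[OF _ continuous_on_dist3[OF assms(1,2)]])
qed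

lemma offdiag_coeff_linear_right:
  assumes "0 < a" "a < 1"
  shows "\<exists>k. \<forall>b\<in>{0<..<1 - a}. offdiag_coeff a b = k * b"
proof (rule continuous_additive_imp_linear)
  show "continuous_on {0<..<1 - a} (offdiag_coeff a)"
    using continuous_on_offdiag_coeff[of "{0<..<1 - a}" "\<lambda>_. a" "\<lambda>b. b"] assms
    by simp
qed (use assms offdiag_coeff_add_right in auto)

lemma offdiag_coeff_linear_left:
  assumes "0 < b" "b < 1"
  shows "\<exists>k. \<forall>a\<in>{0<..<1 - b}. offdiag_coeff a b = k * a"
proof (rule continuous_additive_imp_linear)
  show "continuous_on {0<..<1 - b} (\<lambda>a. offdiag_coeff a b)"
    using continuous_on_offdiag_coeff[of "{0<..<1 - b}" "\<lambda>a. a" "\<lambda>_. b"] assms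
    by (simp add: add.commute)
qed (use assms offdiag_coeff_add_left in auto)

definition fisher_coeff :: real where
  "fisher_coeff = - 16 * offdiag_coeff (1/4) (1/4)"

lemma offdiag_coeff_eq:
  assumes a: "0 < a" and b: "0 < b" and ab: "a + b < 1"
  shows "offdiag_coeff a b = - fisher_coeff * a * b"
proof -
  define t where "t = min (1/4) ((1 - a) / 2)"
  have "t \<le> 1/4" "t \<le> (1 - a) / 2"
    unfolding t_def using min.cobounded1 min.cobounded2 by blast+
  moreover have "0 < t" using a ab b by (simp add: t_def)
  ultimately
  have t: "0 < t" "t < 1 - a" "a < 1 - t" "t < 3/4" "1/4 < 1 - t"
    using a ab b by auto
  obtain k where k: "\<forall>b'\<in>{0<..<1 - a}. offdiag_coeff a b' = k * b'"
    using offdiag_coeff_linear_right[of a] a ab b by auto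
  obtain l where l: "\<forall>a'\<in>{0<..<1 - t}. offdiag_coeff a' t = l * a'"
    using offdiag_coeff_linear_left[of t] t by auto
  obtain k' where k': "\<forall>b'\<in>{0<..<1 - 1/4}. offdiag_coeff (1/4) b' = k' * b'"
    using offdiag_coeff_linear_right[of "1/4"] by auto
  \<comment> \<open>The slopes in the two arguments are tied together at the points (a, t) and (1/4, t).\<close>
  have "k * t = offdiag_coeff a t" using k t by simp
  also have "\<dots> = l * a" using l t a by simp
  finally have "k * t = l * a" .
  have "l * (1/4) = offdiag_coeff (1/4) t" using l t by simp
  also have "\<dots> = k' * t" using k' t by simp
  finally have "k = 4 * a * k'"
    using \<open>k * t = l * a\<close> t by (simp add: field_simps)
  moreover have "offdiag_coeff a b = k * b" using k b ab by simp
  moreover have "offdiag_coeff (1/4) (1/4) = k' * (1/4)" using k' by simp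
  ultimately show ?thesis by (simp add: fisher_coeff_def)
qed

lemma diag_coeff_eq:
  assumes "0 < a" "a < 1"
  shows "diag_coeff a = fisher_coeff * a * (1 - a)"
proof -
  define b where "b = (1 - a) / 2"
  have b: "0 < b" "a + b < 1" "0 < 1 - a - b" using assms by (auto simp: b_def field_simps)
  have "diag_coeff a + (offdiag_coeff a b + offdiag_coeff a (1 - a - b)) = 0"
    using diag_offdiag_row_sum[of 3 "dist3 a b" 1] dist3_in_Pn[of a b] assms b
    by (simp add: Omega_numeral dist3_def)
  then show ?thesis
    using offdiag_coeff_eq[of a b] offdiag_coeff_eq[of a "1 - a - b"] assms b
    by (simp add: algebra_simps)
qed

lemma h_indicator:
  assumes n: "2 \<le> n" and p: "p \<in> Pn n" and x: "x \<in> Omega n" and y: "y \<in> Omega n"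
  shows "h n p (indicator {x}) (indicator {y}) = fisher_coeff * ((if x = y then p x else 0) - p x * p y)"
proof -
  have pos: "0 < p z" if "z \<in> Omega n" for z using p that by (simp add: Pn_def)
  have "p x < 1" using Pn_sum_less_one[OF p, of "{x}"] x n by simp
  then have diag: "h n p (indicator {x}) (indicator {x}) = fisher_coeff * p x * (1 - p x)"
    using h_indicator_diag[OF n p x] diag_coeff_eq[OF pos[OF x]] by simp
  consider "x = y" | "x \<noteq> y" "n = 2" | "x \<noteq> y" "3 \<le> n" using n by linarith
  then show ?thesis
  proof cases
    case 1
    then show ?thesis using diag by (simp add: algebra_simps)
  next
    case 2
    then have O: "Omega n = {x, y}" using x y by (auto simp: Omega_numeral)
    then have py: "p y = 1 - p x" using p 2 by (simp add: Pn_def)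
    have "h n p (indicator {x}) (indicator {x}) + h n p (indicator {x}) (indicator {y}) = 0"
      using tensor_field2_sum_indicator_right[OF tensor_field[OF n] p, of "indicator {x}"] O 2
      by simp
    then show ?thesis using diag 2 by (simp add: py algebra_simps)
  next
    case 3
    then have "card {x, y} < n" by simp
    then have "p x + p y < 1" using Pn_sum_less_one[OF p, of "{x, y}"] x y 3 by simp
    then show ?thesis
      using h_indicator_offdiag[OF 3(2) p x y 3(1)] offdiag_coeff_eq[OF pos[OF x] pos[OF y]] 3(1)
      by simp
  qed
qed

lemma h_eq_fisher:
  assumes n: "2 \<le> n" and p: "p \<in> Pn n"
  shows "h n p A B = fisher_coeff * fisher n p A B"
proof -
  have "h n p A B = (\<Sum>x\<in>Omega n. \<Sum>y\<in>Omega n. A x * B y * h n p (indicator {x}) (indicator {y}))"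
    by (rule tensor_field2_expand[OF tensor_field[OF n] p])
  also have "\<dots> = (\<Sum>x\<in>Omega n. \<Sum>y\<in>Omega n. (if x = y then fisher_coeff * p x * A x * B y else 0)
      - fisher_coeff * ((p x * A x) * (p y * B y)))"
    using n p by (intro sum.cong refl) (simp add: h_indicator algebra_simps)
  also have "\<dots> = fisher_coeff * (\<Sum>x\<in>Omega n. p x * A x * B x)
      - fisher_coeff * ((\<Sum>x\<in>Omega n. p x * A x) * (\<Sum>y\<in>Omega n. p y * B y))"
    unfolding sum_product by (simp add: sum_subtractf sum.delta' sum_distrib_left algebra_simps)
  also have "\<dots> = fisher_coeff * fisher n p A B"
    by (simp add: fisher_def right_diff_distrib)
  finally show ?thesis .
qed

end

theorem mainTheorem8:
  fixes h :: "nat \<Rightarrow> (nat \<Rightarrow> real) \<Rightarrow> (nat \<Rightarrow> real) \<Rightarrow> (nat \<Rightarrow> real) \<Rightarrow> real"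
  assumes "\<forall>n\<ge>2. tensor_field2 n h"
  shows "(\<exists>c. \<forall>n\<ge>2. \<forall>p\<in>Pn n. \<forall>A B. h n p A B = c * fisher n p A B)
     \<longleftrightarrow>
     (\<forall>m n W. 2 \<le> m \<longrightarrow> m \<le> n \<longrightarrow> markov_coembedding n m W \<longrightarrow>
        (\<forall>q\<in>Pn n. \<forall>A B.
           h m (markov_map n m W q) A B = h n q (markov_pullback m W A) (markov_pullback m W B)))"
proof (intro iffI allI impI ballI)
  fix m n W q A B
  assume "\<exists>c. \<forall>n\<ge>2. \<forall>p\<in>Pn n. \<forall>A B. h n p A B = c * fisher n p A B"
    and "2 \<le> m" "m \<le> n" "markov_coembedding n m W" "q \<in> Pn n"
  then show "h m (markov_map n m W q) A B = h n q (markov_pullback m W A) (markov_pullback m W B)"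
    using fisher_multiple_coembedding_invariant by blast
next
  assume "\<forall>m n W. 2 \<le> m \<longrightarrow> m \<le> n \<longrightarrow> markov_coembedding n m W \<longrightarrow>
      (\<forall>q\<in>Pn n. \<forall>A B.
         h m (markov_map n m W q) A B = h n q (markov_pullback m W A) (markov_pullback m W B))"
  with assms have "coembedding_invariant h"
    unfolding coembedding_invariant_def by blast
  then show "\<exists>c. \<forall>n\<ge>2. \<forall>p\<in>Pn n. \<forall>A B. h n p A B = c * fisher n p A B"
    using coembedding_invariant.h_eq_fisher by blast
qed

end
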